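(* Let $p,r$ be positive integers, $q=p+r$, and let $\Phi^*:V^*_{pq}(\mathbb{H})\to\mathbb{C}^{r\times 2p}$ be the map $$\Phi^*(Q)=\begin{pmatrix}U & -V\end{pmatrix}\begin{pmatrix}Z-X & Y-W\\ \bar Y+\bar W & \bar Z+\bar X\end{pmatrix}^{-1},$$ where $Q=(Q_0;Q_1;Q_2)$ with $Q_0=Z+Wj$, $Q_1=X+Yj$, $Q_2=U+Vj$ ($Z,W,X,Y\in\mathbb{C}^{p\times p}$, $U,V\in\mathbb{C}^{r\times p}$). Then the complex valued components of $\Phi^*$ constitute an orthogonal harmonic family of $\mathbf{GL}_p(\mathbb{H})$-invariant functions on $V^*_{pq}(\mathbb{H})$, equipped with the Euclidean metric.
   Context: $\mathbb{H}=\{z+wj: z,w\in\mathbb{C}\}$. $U^*_{pq}(\mathbb{H})=\{Q\in\mathbb{H}^{(p+q)\times p}: Q^*Q \text{ invertible}\}$, with $Q_0,Q_1$ having $p$ rows and $Q_2$ having $r$ rows, and $V^*_{pq}(\mathbb{H})=\{Q\in U^*_{pq}(\mathbb{H}): \det\begin{pmatrix}Z-X & Y-W\\ \bar Y+\bar W & \bar Z+\bar X\end{pmatrix}\neq0\}$. $\mathbf{GL}_p(\mathbb{H})$ acts by right multiplication. The Euclidean metric is $\langle X,Y\rangle=\mathfrak{Re}\,\mathrm{trace}(X^*Y)$. For a Riemannian manifold $(M,g)$ and complex functions $\phi,\psi$, $\tau(\phi)$ is the Laplace–Beltrami operator (extended complex-linearly) and $\kappa(\phi,\psi)=g(\mathrm{grad}\,\phi,\mathrm{grad}\,\psi)$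 with $g$ extended complex-bilinearly. A set $\Omega$ of complex functions is an orthogonal harmonic family if $\tau(\phi)=0$ and $\kappa(\phi,\psi)=0$ for all $\phi,\psi\in\Omega$. *)

theory Defs
  imports "HOL-Analysis.Analysis"
begin

text \<open>A quaternionic m x n matrix A + B j (A, B complex m x n matrices) is encoded
  as the pair (A, B).  Rows are indexed by 'm, columns by 'n.  Quaternion rule: j z = conj z j.\<close>

type_synonym ('n, 'm) hmat = "(complex ^ 'n ^ 'm) \<times> (complex ^ 'n ^ 'm)"

definition cmat_cnj :: "complex ^ 'n::finite ^ 'm::finite \<Rightarrow> complex ^ 'n ^ 'm" where
  "cmat_cnj A = (\<chi> i j. cnj (A $ i $ j))"

definition hmat_mult :: "('n::finite, 'm::finite) hmat \<Rightarrow> ('k::finite, 'n) hmat \<Rightarrow> ('k, 'm) hmat" where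
  "hmat_mult Q G = (case Q of (A, B) \<Rightarrow> case G of (C, D) \<Rightarrow>
      (A ** C - B ** cmat_cnj D, A ** D + B ** cmat_cnj C))"

definition hmat_adj :: "('n::finite, 'm::finite) hmat \<Rightarrow> ('m, 'n) hmat" where
  "hmat_adj Q = (case Q of (A, B) \<Rightarrow> (cmat_cnj (transpose A), - transpose B))"

definition hmat_one :: "('n::finite, 'n) hmat" where
  "hmat_one = (mat 1, 0)"

definition hmat_invertible :: "('n::finite, 'n) hmat \<Rightarrow> bool" where
  "hmat_invertible G \<longleftrightarrow> (\<exists>H. hmat_mult G H = hmat_one \<and> hmat_mult H G = hmat_one)"

text \<open>A point Q = (Q0; Q1; Q2) of H^{(p+q) x p} with Q0, Q1 of size p x p and Q2 of size r x p.
  As a real vector space this is a Euclidean space whose (product) inner product is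
  Re trace (X^* Y), i.e. the Euclidean metric.\<close>

type_synonym ('p, 'r) hpoint = "('p, 'p) hmat \<times> ('p, 'p) hmat \<times> ('p, 'r) hmat"

definition Ustar :: "('p::finite, 'r::finite) hpoint set" where
  "Ustar = {Q. case Q of (Q0, Q1, Q2) \<Rightarrow>
      hmat_invertible (hmat_mult (hmat_adj Q0) Q0 + hmat_mult (hmat_adj Q1) Q1
                       + hmat_mult (hmat_adj Q2) Q2)}"

definition Mmat :: "('p::finite, 'r::finite) hpoint \<Rightarrow> complex ^ ('p + 'p) ^ ('p + 'p)" where
  "Mmat Q = (case Q of ((Z, W), (X, Y), _) \<Rightarrow>
     (\<chi> i j. case i of
        Inl a \<Rightarrow> (case j of Inl b \<Rightarrow> (Z - X) $ a $ b | Inr b \<Rightarrow> (Y - W) $ a $ b)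
      | Inr a \<Rightarrow> (case j of Inl b \<Rightarrow> cnj ((Y + W) $ a $ b) | Inr b \<Rightarrow> cnj ((Z + X) $ a $ b))))"

definition Vstar :: "('p::finite, 'r::finite) hpoint set" where
  "Vstar = {Q \<in> Ustar. det (Mmat Q) \<noteq> 0}"

definition UVmat :: "('p::finite, 'r::finite) hpoint \<Rightarrow> complex ^ ('p + 'p) ^ 'r" where
  "UVmat Q = (case Q of (_, _, (U, V)) \<Rightarrow>
     (\<chi> i j. case j of Inl b \<Rightarrow> U $ i $ b | Inr b \<Rightarrow> - (V $ i $ b)))"

definition PhiStar :: "('p::finite, 'r::finite) hpoint \<Rightarrow> complex ^ ('p + 'p) ^ 'r" where
  "PhiStar Q = UVmat Q ** matrix_inv (Mmat Q)"

definition hact :: "('p::finite, 'r::finite) hpoint \<Rightarrow> ('p, 'p) hmat \<Rightarrow> ('p, 'r) hpoint" where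
  "hact Q g = (case Q of (Q0, Q1, Q2) \<Rightarrow> (hmat_mult Q0 g, hmat_mult Q1 g, hmat_mult Q2 g))"

definition dderiv :: "'a::euclidean_space \<Rightarrow> ('a \<Rightarrow> complex) \<Rightarrow> 'a \<Rightarrow> complex" where
  "dderiv v f x = vector_derivative (\<lambda>t::real. f (x + t *\<^sub>R v)) (at 0)"

definition tau :: "('a::euclidean_space \<Rightarrow> complex) \<Rightarrow> 'a \<Rightarrow> complex" where
  "tau f x = (\<Sum>b\<in>Basis. dderiv b (dderiv b f) x)"

text \<open>kappa(f,g) = g(grad f, grad g), metric extended complex-bilinearly.\<close>
definition kappa :: "('a::euclidean_space \<Rightarrow> complex) \<Rightarrow> ('a \<Rightarrow> complex) \<Rightarrow> 'a \<Rightarrow> complex" where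
  "kappa f g x = (\<Sum>b\<in>Basis. dderiv b f x * dderiv b g x)"

definition orthogonal_harmonic_family ::
    "'a::euclidean_space set \<Rightarrow> ('a \<Rightarrow> complex) set \<Rightarrow> bool" where
  "orthogonal_harmonic_family M \<Omega> \<longleftrightarrow>
     (\<forall>\<phi>\<in>\<Omega>. \<forall>x\<in>M. tau \<phi> x = 0) \<and>
     (\<forall>\<phi>\<in>\<Omega>. \<forall>\<psi>\<in>\<Omega>. \<forall>x\<in>M. kappa \<phi> \<psi> x = 0)"

end

theory Submission
  imports Defs
begin

(* Both L(Q) = (U  -V) and M(Q) = Mmat Q are real-linear in Q, and the right action of g in GL_p(H)
   multiplies both from the right by the complex 2p x 2p matrix representing g, so Phi* = L M^-1 is
   invariant.  Differentiating Phi M = L along lines gives dPhi(v) = (L v - Phi M v) M^-1 and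
   d^2 Phi(v, v) = -2 dPhi(v) M v M^-1.  Hence tau and kappa of the components of Phi* are
   combinations of sums  sum_b F(b)_ij G(b)_kl  over an orthonormal basis, with F, G among L and M.
   These all vanish: each entry of L and M is complex-linear or complex-antilinear in a block of Q,
   and the pairings of a coordinate with its own conjugate cancel between Z and X and between
   W and Y. *)

lemma sum_UNIV_Plus:
  fixes f :: "'a::finite + 'b::finite \<Rightarrow> 'c::comm_monoid_add"
  shows "(\<Sum>x\<in>UNIV. f x) = (\<Sum>a\<in>UNIV. f (Inl a)) + (\<Sum>b\<in>UNIV. f (Inr b))"
  by (subst UNIV_Plus_UNIV[symmetric], subst sum.Plus) (auto simp: o_def)

interpretation matrix_mult: bounded_bilinear
  "(**) :: 'a::{euclidean_space,real_algebra_1}^'n::finite^'m::finite \<Rightarrow> 'a^'k::finite^'n \<Rightarrow> 'a^'k^'m"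
  unfolding bilinear_conv_bounded_bilinear[symmetric] bilinear_def
  by (auto intro!: linearI simp: vec_eq_iff matrix_matrix_mult_def algebra_simps sum.distrib scaleR_sum_right)

lemma cmat_cnj_mult: "cmat_cnj (A ** B) = cmat_cnj A ** cmat_cnj B"
  by (simp add: vec_eq_iff matrix_matrix_mult_def cmat_cnj_def)

lemma
  fixes A :: "'a::field^'n::finite^'n"
  assumes "det A \<noteq> 0"
  shows matrix_inv_right: "A ** matrix_inv A = mat 1"
    and matrix_inv_left: "matrix_inv A ** A = mat 1"
proof -
  have "\<exists>A'. A ** A' = mat 1 \<and> A' ** A = mat 1"
    using assms by (simp add: invertible_det_nz[symmetric] invertible_def)
  then have "A ** matrix_inv A = mat 1 \<and> matrix_inv A ** A = mat 1"
    unfolding matrix_inv_def by (rule someI_ex)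
  then show "A ** matrix_inv A = mat 1" "matrix_inv A ** A = mat 1"
    by auto
qed

lemma matrix_inv_mult:
  fixes A B :: "'a::field^'n::finite^'n"
  assumes "det A \<noteq> 0" "det B \<noteq> 0"
  shows "matrix_inv (A ** B) = matrix_inv B ** matrix_inv A"
proof -
  have "(matrix_inv B ** matrix_inv A) ** (A ** B) = matrix_inv B ** (matrix_inv A ** A) ** B"
    by (simp add: matrix_mul_assoc)
  also have "\<dots> = mat 1"
    using assms by (simp add: matrix_inv_left)
  finally have "matrix_inv (A ** B) = (matrix_inv B ** matrix_inv A) ** (A ** B) ** matrix_inv (A ** B)"
    by simp
  also have "\<dots> = (matrix_inv B ** matrix_inv A) ** ((A ** B) ** matrix_inv (A ** B))"
    by (simp only: matrix_mul_assoc)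
  also have "\<dots> = matrix_inv B ** matrix_inv A"
    using assms by (simp add: det_mul matrix_inv_right)
  finally show ?thesis .
qed

lemma matrix_inv_cramer:
  fixes A :: "'a::field^'n::finite^'n"
  assumes "det A \<noteq> 0"
  shows "matrix_inv A $ i $ k = det (\<chi> a b. if b = i then (if a = k then 1 else 0) else A $ a $ b) / det A"
proof -
  define x where "x = (\<chi> j. matrix_inv A $ j $ k)"
  have "(A *v x) $ a = (A ** matrix_inv A) $ a $ k" for a
    by (simp add: x_def matrix_vector_mult_def matrix_matrix_mult_def)
  then have Ax: "A *v x = (\<chi> a. if a = k then 1 else 0)"
    using assms by (simp add: vec_eq_iff matrix_inv_right mat_def)
  have "det (\<chi> a b. if b = i then (if a = k then 1 else 0) else A $ a $ b) = x $ i * det A"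
    using cramer_lemma[where A = A and k = i and x = x] unfolding Ax vec_lambda_beta .
  then show ?thesis
    using assms by (simp add: x_def)
qed

section \<open>Quaternionic matrices and the action of GL_p(H)\<close>

(* The standard complex representation of quaternionic matrices; being injective and
   multiplicative, it transports the ring laws of complex matrices to hmat_mult. *)
definition hmat_to_cmat :: "('n::finite, 'm::finite) hmat \<Rightarrow> complex ^ ('n + 'n) ^ ('m + 'm)" where
  "hmat_to_cmat X = (case X of (A, B) \<Rightarrow>
     (\<chi> i j. case i of
        Inl a \<Rightarrow> (case j of Inl b \<Rightarrow> A $ a $ b | Inr b \<Rightarrow> - B $ a $ b)
      | Inr a \<Rightarrow> (case j of Inl b \<Rightarrow> cnj (B $ a $ b) | Inr b \<Rightarrow> cnj (A $ a $ b))))"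

lemma hmat_to_cmat_inject: "hmat_to_cmat X = hmat_to_cmat Y \<longleftrightarrow> X = Y"
proof
  assume eq: "hmat_to_cmat X = hmat_to_cmat Y"
  obtain A B C D where XY: "X = (A, B)" "Y = (C, D)"
    by fastforce
  have "A $ a $ b = C $ a $ b \<and> B $ a $ b = D $ a $ b" for a b
    using arg_cong[OF eq, of "\<lambda>Z. Z $ Inl a $ Inl b"] arg_cong[OF eq, of "\<lambda>Z. Z $ Inl a $ Inr b"]
    by (simp add: XY hmat_to_cmat_def)
  then show "X = Y"
    by (simp add: XY vec_eq_iff)
qed simp

lemma hmat_to_cmat_mult: "hmat_to_cmat (hmat_mult X Y) = hmat_to_cmat X ** hmat_to_cmat Y"
  by (cases X; cases Y)
    (simp add: vec_eq_iff hmat_mult_def hmat_to_cmat_def matrix_matrix_mult_def sum_UNIV_Plus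
      cmat_cnj_def sum.distrib sum_subtractf sum_negf algebra_simps split: sum.split)

lemma hmat_to_cmat_add: "hmat_to_cmat (X + Y) = hmat_to_cmat X + hmat_to_cmat Y"
  by (cases X; cases Y) (simp add: vec_eq_iff hmat_to_cmat_def split: sum.split)

lemma hmat_to_cmat_adj: "hmat_to_cmat (hmat_adj X) = cmat_cnj (transpose (hmat_to_cmat X))"
  by (cases X) (simp add: vec_eq_iff hmat_adj_def hmat_to_cmat_def cmat_cnj_def transpose_def split: sum.split)

lemma hmat_to_cmat_one: "hmat_to_cmat hmat_one = mat 1"
  by (simp add: vec_eq_iff hmat_one_def hmat_to_cmat_def mat_def split: sum.split)

lemma hmat_mult_assoc: "hmat_mult (hmat_mult X Y) Z = hmat_mult X (hmat_mult Y Z)"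
  by (simp flip: hmat_to_cmat_inject add: hmat_to_cmat_mult matrix_mul_assoc)

lemma hmat_mult_add_left: "hmat_mult (X + Y) Z = hmat_mult X Z + hmat_mult Y Z"
  by (simp flip: hmat_to_cmat_inject add: hmat_to_cmat_mult hmat_to_cmat_add matrix_mult.add_left)

lemma hmat_mult_add_right: "hmat_mult X (Y + Z) = hmat_mult X Y + hmat_mult X Z"
  by (simp flip: hmat_to_cmat_inject add: hmat_to_cmat_mult hmat_to_cmat_add matrix_mult.add_right)

lemma hmat_mult_one_left [simp]: "hmat_mult hmat_one X = X"
  by (simp flip: hmat_to_cmat_inject add: hmat_to_cmat_mult hmat_to_cmat_one)

lemma hmat_mult_one_right [simp]: "hmat_mult X hmat_one = X"
  by (simp flip: hmat_to_cmat_inject add: hmat_to_cmat_mult hmat_to_cmat_one)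

lemma hmat_adj_mult: "hmat_adj (hmat_mult X Y) = hmat_mult (hmat_adj Y) (hmat_adj X)"
  by (simp flip: hmat_to_cmat_inject
      add: hmat_to_cmat_mult hmat_to_cmat_adj matrix_transpose_mul cmat_cnj_mult)

lemma hmat_adj_one [simp]: "hmat_adj hmat_one = hmat_one"
  by (simp add: hmat_adj_def hmat_one_def cmat_cnj_def transpose_def vec_eq_iff mat_def)

lemma hmat_invertible_mult:
  assumes "hmat_invertible X" "hmat_invertible Y"
  shows "hmat_invertible (hmat_mult X Y)"
proof -
  obtain X' Y' where "hmat_mult X X' = hmat_one" "hmat_mult X' X = hmat_one"
    "hmat_mult Y Y' = hmat_one" "hmat_mult Y' Y = hmat_one"
    using assms unfolding hmat_invertible_def by blast
  then show ?thesis
    unfolding hmat_invertible_def by (metis hmat_mult_assoc hmat_mult_one_left hmat_mult_one_right)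
qed

lemma hmat_invertible_adj:
  assumes "hmat_invertible X"
  shows "hmat_invertible (hmat_adj X)"
  using assms unfolding hmat_invertible_def by (metis hmat_adj_mult hmat_adj_one)

lemma det_hmat_to_cmat_nonzero:
  assumes "hmat_invertible g"
  shows "det (hmat_to_cmat g) \<noteq> 0"
proof -
  obtain h where "hmat_mult g h = hmat_one"
    using assms unfolding hmat_invertible_def by blast
  then have "det (hmat_to_cmat g) * det (hmat_to_cmat h) = 1"
    by (metis det_mul det_I hmat_to_cmat_mult hmat_to_cmat_one)
  then show ?thesis
    by auto
qed

lemma hpoint_cases:
  obtains Z W X Y U V where "Q = ((Z, W), (X, Y), (U, V))"
  by (metis prod.exhaust)

lemma Ustar_hact:
  assumes "Q \<in> Ustar" "hmat_invertible g"
  shows "hact Q g \<in> Ustar"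
proof -
  obtain Q0 Q1 Q2 where Q: "Q = (Q0, Q1, Q2)"
    by (metis prod.exhaust)
  let ?S = "hmat_mult (hmat_adj Q0) Q0 + hmat_mult (hmat_adj Q1) Q1 + hmat_mult (hmat_adj Q2) Q2"
  have "hmat_invertible (hmat_mult (hmat_adj g) (hmat_mult ?S g))"
    using assms by (simp add: Ustar_def Q hmat_invertible_mult hmat_invertible_adj)
  then show ?thesis
    by (simp add: Ustar_def Q hact_def hmat_adj_mult hmat_mult_assoc hmat_mult_add_left hmat_mult_add_right)
qed

lemma Mmat_hact: "Mmat (hact Q g) = Mmat Q ** hmat_to_cmat g"
proof -
  obtain Z W X Y U V where "Q = ((Z, W), (X, Y), (U, V))"
    by (rule hpoint_cases)
  then show ?thesis
    by (cases g) (simp add: vec_eq_iff Mmat_def hact_def hmat_mult_def hmat_to_cmat_def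
        matrix_matrix_mult_def sum_UNIV_Plus cmat_cnj_def sum.distrib sum_subtractf sum_negf
        algebra_simps split: sum.split)
qed

lemma UVmat_hact: "UVmat (hact Q g) = UVmat Q ** hmat_to_cmat g"
proof -
  obtain Z W X Y U V where "Q = ((Z, W), (X, Y), (U, V))"
    by (rule hpoint_cases)
  then show ?thesis
    by (cases g) (simp add: vec_eq_iff UVmat_def hact_def hmat_mult_def hmat_to_cmat_def
        matrix_matrix_mult_def sum_UNIV_Plus cmat_cnj_def sum.distrib sum_subtractf sum_negf
        algebra_simps split: sum.split)
qed

lemma Vstar_hact:
  assumes "Q \<in> Vstar" "hmat_invertible g"
  shows "hact Q g \<in> Vstar"
  using assms by (simp add: Vstar_def Ustar_hact Mmat_hact det_mul det_hmat_to_cmat_nonzero)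

lemma PhiStar_hact:
  assumes "Q \<in> Vstar" "hmat_invertible g"
  shows "PhiStar (hact Q g) = PhiStar Q"
proof -
  have "det (Mmat Q) \<noteq> 0" "det (hmat_to_cmat g) \<noteq> 0"
    using assms by (simp_all add: Vstar_def det_hmat_to_cmat_nonzero)
  then show ?thesis
    by (simp add: PhiStar_def Mmat_hact UVmat_hact matrix_inv_mult matrix_mul_assoc)
      (simp add: matrix_inv_right flip: matrix_mul_assoc)
qed

section \<open>Derivatives of matrix valued functions along lines\<close>

lemma has_vector_derivative_vec_lambda:
  fixes f :: "'i::finite \<Rightarrow> real \<Rightarrow> 'a::euclidean_space"
  assumes "\<And>i. ((\<lambda>t. f i t) has_vector_derivative f' i) F"
  shows "((\<lambda>t. \<chi> i. f i t) has_vector_derivative (\<chi> i. f' i)) F"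
proof -
  have "linear (axis i :: 'a \<Rightarrow> 'a^'i)" for i
    by (rule linearI) (simp_all add: vec_eq_iff axis_def)
  then have "((\<lambda>t. axis i (f i t)) has_vector_derivative axis i (f' i)) F" for i
    by (intro bounded_linear.has_vector_derivative[OF _ assms]) (simp add: linear_conv_bounded_linear)
  then have "((\<lambda>t. \<Sum>i\<in>UNIV. axis i (f i t)) has_vector_derivative (\<Sum>i\<in>UNIV. axis i (f' i))) F"
    by (rule has_vector_derivative_sum)
  moreover have "(\<Sum>i\<in>UNIV. axis i (y i)) = (\<chi> i. y i)" for y :: "'i \<Rightarrow> 'a"
    by (simp add: vec_eq_iff axis_def)
  ultimately show ?thesis
    by simp
qed

lemma has_vector_derivative_matrix_entry:
  assumes "(A has_vector_derivative A') F"
  shows "((\<lambda>t. A t $ i $ j) has_vector_derivative A' $ i $ j) F"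
  using bounded_linear.has_vector_derivative[OF bounded_linear_vec_nth
      bounded_linear.has_vector_derivative[OF bounded_linear_vec_nth assms]] .

lemma has_vector_derivative_line: "((\<lambda>t. a + t *\<^sub>R b) has_vector_derivative b) (at t within S)"
  by (auto intro!: derivative_eq_intros)

lemma differentiable_prod:
  fixes f :: "'i \<Rightarrow> 'a::real_normed_vector \<Rightarrow> 'b::real_normed_field"
  assumes "\<And>i. i \<in> I \<Longrightarrow> f i differentiable (at x within S)"
  shows "(\<lambda>x. \<Prod>i\<in>I. f i x) differentiable (at x within S)"
proof -
  obtain f' where "\<And>i. i \<in> I \<Longrightarrow> (f i has_derivative f' i) (at x within S)"
    using assms unfolding differentiable_def by metis
  then show ?thesis
    unfolding differentiable_def by (blast intro: has_derivative_prod)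
qed

lemma differentiable_det:
  fixes A :: "'a::real_normed_vector \<Rightarrow> 'b::real_normed_field^'n::finite^'n"
  assumes "\<And>i j. (\<lambda>x. A x $ i $ j) differentiable (at x within S)"
  shows "(\<lambda>x. det (A x)) differentiable (at x within S)"
  unfolding det_def
  by (intro differentiable_sum differentiable_mult differentiable_const differentiable_prod assms ballI)
    (simp add: finite_permutations)

lemma differentiable_det_line:
  fixes M B :: "'a::real_normed_field^'n::finite^'n"
  shows "(\<lambda>t. det (M + t *\<^sub>R B)) differentiable at t"
  by (intro differentiable_det) (simp add: differentiableI_vector has_vector_derivative_line)

lemma open_det_line_nonzero:
  fixes M B :: "'a::real_normed_field^'n::finite^'n"
  shows "open {t. det (M + t *\<^sub>R B) \<noteq> 0}"
proof -
  have "continuous_on UNIV (\<lambda>t. det (M + t *\<^sub>R B))"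
    by (rule differentiable_imp_continuous_on) (simp add: differentiable_on_def differentiable_det_line)
  then show ?thesis
    by (rule open_Collect_neq[OF _ continuous_on_const])
qed

lemma differentiable_matrix_inv_line:
  fixes M B :: "'a::{real_normed_field,euclidean_space}^'n::finite^'n"
  assumes "det M \<noteq> 0"
  shows "(\<lambda>t. matrix_inv (M + t *\<^sub>R B)) differentiable at 0"
proof -
  define S where "S = {t. det (M + t *\<^sub>R B) \<noteq> 0}"
  have "open S" "0 \<in> S"
    using assms open_det_line_nonzero by (simp_all add: S_def)
  define C where "C t = (\<chi> i k. det (\<chi> a b. if b = i then (if a = k then 1 else 0) else (M + t *\<^sub>R B) $ a $ b)
      / det (M + t *\<^sub>R B))" for t
  have cramer_entry_differentiable:
    "(\<lambda>t. if b = i then c else (M + t *\<^sub>R B) $ a $ b) differentiable at t" for a b c i t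
    by (cases "b = i") (simp_all add: differentiableI_vector has_vector_derivative_line)
  have "(\<lambda>t. C t $ i $ k) differentiable at 0" for i k
  proof -
    have "(\<lambda>t. det (\<chi> a b. if b = i then (if a = k then 1 else 0) else (M + t *\<^sub>R B) $ a $ b))
        differentiable at 0"
      by (rule differentiable_det) (simp only: vec_lambda_beta cramer_entry_differentiable)
    then show ?thesis
      using assms
      by (simp only: C_def vec_lambda_beta) (rule differentiable_divide[OF _ differentiable_det_line]; simp)
  qed
  then have "((\<lambda>t. \<chi> i k. C t $ i $ k) has_vector_derivative
      (\<chi> i k. vector_derivative (\<lambda>t. C t $ i $ k) (at 0))) (at 0)"
    by (intro has_vector_derivative_vec_lambda) (simp add: vector_derivative_works[symmetric])
  then obtain D where "(C has_vector_derivative D) (at 0)"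
    by auto
  then have "((\<lambda>t. matrix_inv (M + t *\<^sub>R B)) has_vector_derivative D) (at 0)"
    by (rule has_vector_derivative_transform_within_open[OF _ \<open>open S\<close> \<open>0 \<in> S\<close>])
      (simp add: C_def S_def vec_eq_iff matrix_inv_cramer)
  then show ?thesis
    by (rule differentiableI_vector)
qed

lemma has_vector_derivative_matrix_inv_line:
  fixes M B :: "'a::{real_normed_field,euclidean_space}^'n::finite^'n"
  assumes "det M \<noteq> 0"
  shows "((\<lambda>t. matrix_inv (M + t *\<^sub>R B)) has_vector_derivative - (matrix_inv M ** B ** matrix_inv M)) (at 0)"
proof -
  define S where "S = {t. det (M + t *\<^sub>R B) \<noteq> 0}"
  have "open S" "0 \<in> S"
    using assms open_det_line_nonzero by (simp_all add: S_def)
  obtain D where D: "((\<lambda>t. matrix_inv (M + t *\<^sub>R B)) has_vector_derivative D) (at 0)"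
    using differentiable_matrix_inv_line[OF assms] vector_derivative_works by blast
  have "((\<lambda>t. matrix_inv (M + t *\<^sub>R B) ** (M + t *\<^sub>R B)) has_vector_derivative
      matrix_inv M ** B + D ** M) (at 0)"
    using matrix_mult.has_vector_derivative[OF D has_vector_derivative_line] by simp
  moreover have "((\<lambda>t. matrix_inv (M + t *\<^sub>R B) ** (M + t *\<^sub>R B)) has_vector_derivative 0) (at 0)"
    by (rule has_vector_derivative_transform_within_open[OF _ \<open>open S\<close> \<open>0 \<in> S\<close>])
      (auto simp: S_def matrix_inv_left)
  ultimately have "matrix_inv M ** B + D ** M = 0"
    by (rule vector_derivative_unique_at)
  then have DM: "D ** M = - (matrix_inv M ** B)"
    by (rule minus_unique[symmetric])
  have "D = D ** M ** matrix_inv M"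
    using assms by (simp add: matrix_inv_right flip: matrix_mul_assoc)
  also have "\<dots> = - (matrix_inv M ** B ** matrix_inv M)"
    by (simp add: DM matrix_mult.minus_left)
  finally show ?thesis
    using D by simp
qed

lemma dderiv_eqI:
  assumes "((\<lambda>t. f (x + t *\<^sub>R v)) has_vector_derivative D) (at 0)"
  shows "dderiv v f x = D"
  using assms by (simp add: dderiv_def vector_derivative_at)

section \<open>Quotients of linear maps with mutually orthogonal entries\<close>

(* For real-linear F and G this says that kappa vanishes on every pair of an entry function of F
   and an entry function of G. *)
definition orthogonal_entries ::
    "('a::euclidean_space \<Rightarrow> complex^'n::finite^'m::finite) \<Rightarrow> ('a \<Rightarrow> complex^'k::finite^'l::finite) \<Rightarrow> bool"
  where "orthogonal_entries F G \<longleftrightarrow> (\<forall>i j k l. (\<Sum>b\<in>Basis. F b $ i $ j * G b $ k $ l) = 0)"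

lemma orthogonal_entries_sym: "orthogonal_entries F G \<Longrightarrow> orthogonal_entries G F"
  by (simp add: orthogonal_entries_def mult.commute)

lemma orthogonal_entries_mult_left:
  assumes "orthogonal_entries F G"
  shows "orthogonal_entries (\<lambda>b. X ** F b) G"
proof -
  have "(\<Sum>b\<in>Basis. (X ** F b) $ i $ j * G b $ k $ l)
      = (\<Sum>p\<in>UNIV. X $ i $ p * (\<Sum>b\<in>Basis. F b $ p $ j * G b $ k $ l))" for i j k l
    by (simp add: matrix_matrix_mult_def sum_distrib_left sum_distrib_right mult.assoc sum.swap[of _ Basis])
  with assms show ?thesis
    by (simp add: orthogonal_entries_def)
qed

lemma orthogonal_entries_mult_right:
  assumes "orthogonal_entries F G"
  shows "orthogonal_entries (\<lambda>b. F b ** Y) G"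
proof -
  have "(\<Sum>b\<in>Basis. (F b ** Y) $ i $ j * G b $ k $ l)
      = (\<Sum>p\<in>UNIV. Y $ p $ j * (\<Sum>b\<in>Basis. F b $ i $ p * G b $ k $ l))" for i j k l
    by (simp add: matrix_matrix_mult_def sum_distrib_left sum_distrib_right ac_simps sum.swap[of _ Basis])
  with assms show ?thesis
    by (simp add: orthogonal_entries_def)
qed

lemma orthogonal_entries_diff:
  assumes "orthogonal_entries F H" "orthogonal_entries G H"
  shows "orthogonal_entries (\<lambda>b. F b - G b) H"
  using assms by (simp add: orthogonal_entries_def left_diff_distrib sum_subtractf)

lemma orthogonal_entries_sum_mult:
  assumes "orthogonal_entries F G"
  shows "(\<Sum>b\<in>Basis. (F b ** G b) $ i $ j) = 0"
proof -
  have "(\<Sum>b\<in>Basis. (F b ** G b) $ i $ j) = (\<Sum>k\<in>UNIV. \<Sum>b\<in>Basis. F b $ i $ k * G b $ k $ j)"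
    unfolding matrix_matrix_mult_def vec_lambda_beta by (rule sum.swap)
  with assms show ?thesis
    by (simp add: orthogonal_entries_def)
qed

locale orthogonal_linear_pair =
  fixes L :: "'a::euclidean_space \<Rightarrow> complex^'n::finite^'m::finite"
    and M :: "'a \<Rightarrow> complex^'n^'n"
  assumes linear_L: "linear L" and linear_M: "linear M"
    and orthogonal_L_L: "orthogonal_entries L L"
    and orthogonal_L_M: "orthogonal_entries L M"
    and orthogonal_M_M: "orthogonal_entries M M"
begin

definition Phi :: "'a \<Rightarrow> complex^'n^'m" where
  "Phi x = L x ** matrix_inv (M x)"

definition dPhi :: "'a \<Rightarrow> 'a \<Rightarrow> complex^'n^'m" where
  "dPhi x v = (L v - Phi x ** M v) ** matrix_inv (M x)"

lemma L_line: "L (x + t *\<^sub>R v) = L x + t *\<^sub>R L v"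
  using linear_L by (simp add: linear_add linear_scale)

lemma M_line: "M (x + t *\<^sub>R v) = M x + t *\<^sub>R M v"
  using linear_M by (simp add: linear_add linear_scale)

lemma has_vector_derivative_Phi_line:
  assumes "det (M x) \<noteq> 0"
  shows "((\<lambda>t. Phi (x + t *\<^sub>R v)) has_vector_derivative dPhi x v) (at 0)"
  using matrix_mult.has_vector_derivative[OF has_vector_derivative_line
      has_vector_derivative_matrix_inv_line[OF assms]]
  by (simp add: Phi_def dPhi_def L_line M_line matrix_mult.diff_left matrix_mult.minus_right matrix_mul_assoc)

lemma dderiv_Phi:
  assumes "det (M x) \<noteq> 0"
  shows "dderiv v (\<lambda>y. Phi y $ a $ c) x = dPhi x v $ a $ c"
  by (rule dderiv_eqI has_vector_derivative_matrix_entry has_vector_derivative_Phi_line assms)+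

lemma dderiv_dderiv_Phi:
  assumes "det (M x) \<noteq> 0"
  shows "dderiv v (dderiv v (\<lambda>y. Phi y $ a $ c)) x = - 2 * (dPhi x v ** (M v ** matrix_inv (M x))) $ a $ c"
proof (rule dderiv_eqI)
  define S where "S = {t. det (M (x + t *\<^sub>R v)) \<noteq> 0}"
  have "open S" "0 \<in> S"
    using assms open_det_line_nonzero by (simp_all add: S_def M_line)
  note inv = has_vector_derivative_matrix_inv_line[OF assms, of "M v", folded M_line]
  note D = matrix_mult.has_vector_derivative[OF has_vector_derivative_diff[OF has_vector_derivative_const
        matrix_mult.has_vector_derivative[OF has_vector_derivative_Phi_line[OF assms]
          has_vector_derivative_const]] inv]
  show "((\<lambda>t. dderiv v (\<lambda>y. Phi y $ a $ c) (x + t *\<^sub>R v)) has_vector_derivative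
      - 2 * (dPhi x v ** (M v ** matrix_inv (M x))) $ a $ c) (at 0)"
  proof (rule has_vector_derivative_eq_rhs[OF has_vector_derivative_transform_within_open
        [OF has_vector_derivative_matrix_entry[OF D] \<open>open S\<close> \<open>0 \<in> S\<close>]])
    show "((L v - Phi (x + t *\<^sub>R v) ** M v) ** matrix_inv (M (x + t *\<^sub>R v))) $ a $ c
        = dderiv v (\<lambda>y. Phi y $ a $ c) (x + t *\<^sub>R v)" if "t \<in> S" for t
      using that by (simp add: S_def dderiv_Phi dPhi_def)
    (* Both summands equal - dPhi x v ** M v ** matrix_inv (M x). *)
    show "((L v - Phi (x + 0 *\<^sub>R v) ** M v) ** - (matrix_inv (M x) ** M v ** matrix_inv (M x))
        + (0 - (Phi (x + 0 *\<^sub>R v) ** 0 + dPhi x v ** M v)) ** matrix_inv (M (x + 0 *\<^sub>R v))) $ a $ c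
        = - 2 * (dPhi x v ** (M v ** matrix_inv (M x))) $ a $ c"
      by (simp add: dPhi_def matrix_mult.minus_left matrix_mult.minus_right matrix_mul_assoc)
  qed
qed

lemma orthogonal_entries_dPhi:
  shows "orthogonal_entries (dPhi x) (dPhi x)"
    and "orthogonal_entries (dPhi x) (\<lambda>v. M v ** matrix_inv (M x))"
proof -
  let ?K = "\<lambda>v. L v - Phi x ** M v"
  have K_M: "orthogonal_entries ?K M"
    by (rule orthogonal_entries_diff[OF orthogonal_L_M orthogonal_entries_mult_left[OF orthogonal_M_M]])
  have K_L: "orthogonal_entries ?K L"
    by (rule orthogonal_entries_diff[OF orthogonal_L_L
          orthogonal_entries_mult_left[OF orthogonal_entries_sym[OF orthogonal_L_M]]])
  have K_K: "orthogonal_entries ?K ?K"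
    by (rule orthogonal_entries_diff[OF orthogonal_entries_sym[OF K_L]
          orthogonal_entries_mult_left[OF orthogonal_entries_sym[OF K_M]]])
  show "orthogonal_entries (dPhi x) (dPhi x)"
    unfolding dPhi_def[abs_def]
    by (rule orthogonal_entries_mult_right[OF orthogonal_entries_sym[OF
          orthogonal_entries_mult_right[OF K_K]]])
  show "orthogonal_entries (dPhi x) (\<lambda>v. M v ** matrix_inv (M x))"
    unfolding dPhi_def[abs_def]
    by (rule orthogonal_entries_mult_right[OF orthogonal_entries_sym[OF
          orthogonal_entries_mult_right[OF orthogonal_entries_sym[OF K_M]]]])
qed

lemma tau_Phi:
  assumes "det (M x) \<noteq> 0"
  shows "tau (\<lambda>y. Phi y $ a $ c) x = 0"
  using orthogonal_entries_sum_mult[OF orthogonal_entries_dPhi(2)]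
  by (simp add: tau_def dderiv_dderiv_Phi assms sum_negf flip: sum_distrib_left)

lemma kappa_Phi:
  assumes "det (M x) \<noteq> 0"
  shows "kappa (\<lambda>y. Phi y $ a $ c) (\<lambda>y. Phi y $ a' $ c') x = 0"
  using orthogonal_entries_dPhi(1) assms by (simp add: kappa_def dderiv_Phi orthogonal_entries_def)

lemma orthogonal_harmonic_family_Phi:
  "orthogonal_harmonic_family {x. det (M x) \<noteq> 0} (range (\<lambda>(a, c) x. Phi x $ a $ c))"
  by (auto simp: orthogonal_harmonic_family_def tau_Phi kappa_Phi)

end

lemma sum_Basis_prod:
  "(\<Sum>b\<in>(Basis::('a::euclidean_space \<times> 'b::euclidean_space) set). f b)
     = (\<Sum>u\<in>Basis. f (u, 0)) + (\<Sum>v\<in>Basis. f (0, v))"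
proof -
  have "inj_on (\<lambda>u. (u::'a, 0::'b)) Basis" "inj_on (\<lambda>v. (0::'a, v::'b)) Basis"
    by (auto intro!: inj_onI)
  then show ?thesis
    unfolding Basis_prod_def by (subst sum.union_disjoint) (auto simp: sum.reindex)
qed

lemma sum_Basis_vec:
  "(\<Sum>b\<in>(Basis::('a::euclidean_space ^ 'n::finite) set). f b) = (\<Sum>i\<in>UNIV. \<Sum>u\<in>Basis. f (axis i u))"
proof -
  have inj: "inj_on (\<lambda>(i, u). axis i u) (UNIV \<times> (Basis::'a set))"
    by (auto intro!: inj_onI simp: axis_eq_axis dest: nonzero_Basis)
  have Basis: "(Basis::('a ^ 'n) set) = (\<lambda>(i, u). axis i u) ` (UNIV \<times> Basis)"
    unfolding Basis_vec_def by auto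
  show ?thesis
    unfolding Basis sum.reindex[OF inj] by (simp add: sum.cartesian_product case_prod_beta)
qed

lemma sum_Basis_cmat:
  "(\<Sum>b\<in>(Basis::(complex ^ 'n::finite ^ 'm::finite) set). f b)
     = (\<Sum>i\<in>UNIV. \<Sum>j\<in>UNIV. f (axis i (axis j 1)) + f (axis i (axis j \<i>)))"
  by (simp add: sum_Basis_vec Basis_complex_def)

lemma axis_axis_nth: "axis i (axis j u) $ a $ b = (if a = i \<and> b = j then u else 0)"
  by (simp add: axis_def)

lemma Mmat_apply:
  "Mmat ((Z, W), (X, Y), R) $ m $ n = (case m of
        Inl a \<Rightarrow> (case n of Inl b \<Rightarrow> Z $ a $ b - X $ a $ b | Inr b \<Rightarrow> Y $ a $ b - W $ a $ b)
      | Inr a \<Rightarrow> (case n of Inl b \<Rightarrow> cnj (Y $ a $ b) + cnj (W $ a $ b)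
                          | Inr b \<Rightarrow> cnj (Z $ a $ b) + cnj (X $ a $ b)))"
  by (simp add: Mmat_def split: sum.split)

lemma UVmat_apply:
  "UVmat (P0, P1, (U, V)) $ i $ n = (case n of Inl b \<Rightarrow> U $ i $ b | Inr b \<Rightarrow> - V $ i $ b)"
  by (simp add: UVmat_def split: sum.split)

lemma linear_Mmat: "linear Mmat"
proof (rule linearI)
  fix x y :: "('p::finite, 'r::finite) hpoint" and c :: real
  obtain Z W X Y U V where x: "x = ((Z, W), (X, Y), (U, V))"
    by (rule hpoint_cases)
  obtain Z' W' X' Y' U' V' where y: "y = ((Z', W'), (X', Y'), (U', V'))"
    by (rule hpoint_cases)
  show "Mmat (x + y) = Mmat x + Mmat y" "Mmat (c *\<^sub>R x) = c *\<^sub>R Mmat x"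
    by (simp_all add: x y vec_eq_iff Mmat_apply algebra_simps split: sum.split)
qed

lemma linear_UVmat: "linear UVmat"
proof (rule linearI)
  fix x y :: "('p::finite, 'r::finite) hpoint" and c :: real
  obtain Z W X Y U V where x: "x = ((Z, W), (X, Y), (U, V))"
    by (rule hpoint_cases)
  obtain Z' W' X' Y' U' V' where y: "y = ((Z', W'), (X', Y'), (U', V'))"
    by (rule hpoint_cases)
  show "UVmat (x + y) = UVmat x + UVmat y" "UVmat (c *\<^sub>R x) = c *\<^sub>R UVmat x"
    by (simp_all add: x y vec_eq_iff UVmat_apply split: sum.split)
qed

(* Over the basis {1, i} of a complex coordinate z, the products z z' and conj z conj z' sum to 0,
   while z conj z sums to 2; such terms only arise from (Z - X) conj (Z + X) and
   (Y - W) conj (Y + W), where they cancel. *)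
lemma orthogonal_entries_Mmat_Mmat: "orthogonal_entries (Mmat :: ('p::finite, 'r::finite) hpoint \<Rightarrow> _) Mmat"
  unfolding orthogonal_entries_def
proof (intro allI)
  fix m n m' n' :: "'p + 'p"
  show "(\<Sum>b\<in>(Basis::('p, 'r) hpoint set). Mmat b $ m $ n * Mmat b $ m' $ n') = 0"
    by (simp only: sum_Basis_prod sum_Basis_cmat zero_prod_def Mmat_apply)
      (cases m; cases n; cases m'; cases n'; auto intro!: sum.neutral simp: axis_axis_nth algebra_simps
        simp flip: sum.distrib)
qed

lemma orthogonal_entries_UVmat_Mmat:
  "orthogonal_entries (UVmat :: ('p::finite, 'r::finite) hpoint \<Rightarrow> _) Mmat"
  unfolding orthogonal_entries_def
proof (intro allI)
  fix i n m' n'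
  show "(\<Sum>b\<in>(Basis::('p, 'r) hpoint set). UVmat b $ i $ n * Mmat b $ m' $ n') = 0"
    by (simp only: sum_Basis_prod sum_Basis_cmat zero_prod_def Mmat_apply UVmat_apply)
      (cases n; cases m'; cases n'; simp add: axis_axis_nth sum.distrib[symmetric])
qed

lemma orthogonal_entries_UVmat_UVmat:
  "orthogonal_entries (UVmat :: ('p::finite, 'r::finite) hpoint \<Rightarrow> _) UVmat"
  unfolding orthogonal_entries_def
proof (intro allI)
  fix i n i' n'
  show "(\<Sum>b\<in>(Basis::('p, 'r) hpoint set). UVmat b $ i $ n * UVmat b $ i' $ n') = 0"
    by (simp only: sum_Basis_prod sum_Basis_cmat zero_prod_def UVmat_apply)
      (cases n; cases n'; auto intro!: sum.neutral simp: axis_axis_nth algebra_simps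
        simp flip: sum.distrib)
qed

lemma orthogonal_linear_pair_UVmat_Mmat:
  "orthogonal_linear_pair (UVmat :: ('p::finite, 'r::finite) hpoint \<Rightarrow> _) Mmat"
  using linear_UVmat linear_Mmat orthogonal_entries_UVmat_UVmat orthogonal_entries_UVmat_Mmat
    orthogonal_entries_Mmat_Mmat
  by (rule orthogonal_linear_pair.intro)

theorem proposition10p1:
  fixes Phi_comp :: "'r::finite \<Rightarrow> ('p::finite + 'p) \<Rightarrow> ('p, 'r) hpoint \<Rightarrow> complex"
  defines "Phi_comp \<equiv> (\<lambda>a b Q. PhiStar Q $ a $ b)"
  shows "orthogonal_harmonic_family (Vstar :: ('p, 'r) hpoint set) (range (\<lambda>(a, b). Phi_comp a b))
    \<and> (\<forall>g Q a b. hmat_invertible g \<longrightarrow> Q \<in> (Vstar :: ('p, 'r) hpoint set) \<longrightarrow>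
          hact Q g \<in> Vstar \<and> Phi_comp a b (hact Q g) = Phi_comp a b Q)"
proof (intro conjI allI impI)
  interpret orthogonal_linear_pair "UVmat :: ('p, 'r) hpoint \<Rightarrow> _" Mmat
    by (rule orthogonal_linear_pair_UVmat_Mmat)
  have "orthogonal_harmonic_family {Q. det (Mmat Q) \<noteq> 0} (range (\<lambda>(a, b). Phi_comp a b))"
    using orthogonal_harmonic_family_Phi by (simp add: Phi_comp_def PhiStar_def Phi_def[abs_def])
  then show "orthogonal_harmonic_family Vstar (range (\<lambda>(a, b). Phi_comp a b))"
    by (auto simp: orthogonal_harmonic_family_def Vstar_def)
  fix g :: "('p, 'p) hmat" and Q :: "('p, 'r) hpoint" and a b
  assume "hmat_invertible g" "Q \<in> Vstar"
  then show "hact Q g \<in> Vstar" "Phi_comp a b (hact Q g) = Phi_comp a b Q"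
    by (simp_all add: Vstar_hact PhiStar_hact Phi_comp_def)
qed

end
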